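(* Let $T$ be a discrete valuation ring with uniformizer $t$ and valuation $v_t$, let $m\ge1$, and let $\xi=(\xi_0,\dots,\xi_{m-1})$ be a minimally ordered tuple of pairwise distinct elements of $T$. Then the matrix $L_\xi=(L_{i,j}(\xi))_{i,j\in[0,m-1]}$ has all entries in $T$, where $L_{i,j}(\xi)=\prod_{k\in[0,j-1]\setminus\{i\}}(\xi_j-\xi_k)\big/\prod_{k\in[0,j-1]\setminus\{i\}}(\xi_i-\xi_k)$ for $i<j$ and $L_{i,j}(\xi)=0$ for $i\ge j$. In particular, for $i\in[0,m-1]$ the $(i+1)$st $T$-linear elementary divisor of the Vandermonde matrix $V_\xi=(\xi_j^i)_{i,j\in[0,m-1]}$ has valuation $\sum_{j\in[0,i-1]}v_t(\xi_i-\xi_j)$.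
   Context: A tuple $(\xi_0,\dots,\xi_{m-1})$ of pairwise distinct elements of $T$ is minimally ordered if $\sum_{i\in[0,j-1]}v_t(\xi_j-\xi_i)\le\sum_{i\in[0,j-1]}v_t(\xi_k-\xi_i)$ for all $j\in[0,m-1]$ and $k\in[j+1,m-1]$. The elementary divisors of a matrix $A\in T^{m\times m}$ with nonzero determinant are $t^{e_0},\dots,t^{e_{m-1}}$, $e_0\le\dots\le e_{m-1}$, with $A=U\,\mathrm{diag}(t^{e_0},\dots,t^{e_{m-1}})\,W$ for invertible $U,W$ over $T$; the $(i+1)$st has valuation $e_i$. *)

theory Defs
  imports "HOL-Computational_Algebra.Polynomial_Factorial" "Jordan_Normal_Form.Matrix"
begin

text \<open>A discrete valuation ring is modelled by an integral domain type 'a (the ring T),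
  an element t (uniformizer) and a function v (the valuation v_t on nonzero elements):
  t is a nonzero nonunit and every nonzero x equals a unit times t ^ v x.
  (This forces T to be a DVR with uniformizer t, and v to be its normalized valuation.)\<close>
definition dvr_uniformizer_valuation :: "'a::idom \<Rightarrow> ('a \<Rightarrow> nat) \<Rightarrow> bool" where
  "dvr_uniformizer_valuation t v \<longleftrightarrow>
     t \<noteq> 0 \<and> \<not> t dvd 1 \<and>
     (\<forall>x. x \<noteq> 0 \<longrightarrow> (\<exists>u. u dvd 1 \<and> x = u * t ^ v x))"

definition minimally_ordered :: "('a::idom \<Rightarrow> nat) \<Rightarrow> nat \<Rightarrow> (nat \<Rightarrow> 'a) \<Rightarrow> bool" where
  "minimally_ordered v m \<xi> \<longleftrightarrow>
     inj_on \<xi> {..<m} \<and>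
     (\<forall>j<m. \<forall>k. j < k \<and> k < m \<longrightarrow>
        (\<Sum>i<j. v (\<xi> j - \<xi> i)) \<le> (\<Sum>i<j. v (\<xi> k - \<xi> i)))"

definition L_mat :: "nat \<Rightarrow> (nat \<Rightarrow> 'a::idom) \<Rightarrow> 'a fract mat" where
  "L_mat m \<xi> = mat m m (\<lambda>(i, j).
     if i < j then
       (\<Prod>k\<in>{..<j} - {i}. to_fract (\<xi> j - \<xi> k)) /
       (\<Prod>k\<in>{..<j} - {i}. to_fract (\<xi> i - \<xi> k))
     else 0)"

definition vandermonde :: "nat \<Rightarrow> (nat \<Rightarrow> 'a::comm_ring_1) \<Rightarrow> 'a mat" where
  "vandermonde m \<xi> = mat m m (\<lambda>(i, j). \<xi> j ^ i)"

definition diag_pow :: "nat \<Rightarrow> 'a::comm_ring_1 \<Rightarrow> (nat \<Rightarrow> nat) \<Rightarrow> 'a mat" where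
  "diag_pow m t e = mat m m (\<lambda>(i, j). if i = j then t ^ e i else 0)"

definition elementary_divisor_exponents :: "'a::comm_ring_1 \<Rightarrow> nat \<Rightarrow> 'a mat \<Rightarrow> (nat \<Rightarrow> nat) \<Rightarrow> bool" where
  "elementary_divisor_exponents t m A e \<longleftrightarrow>
     (\<forall>i j. i \<le> j \<and> j < m \<longrightarrow> e i \<le> e j) \<and>
     (\<exists>U W. U \<in> carrier_mat m m \<and> W \<in> carrier_mat m m \<and>
        invertible_mat U \<and> invertible_mat W \<and> A = U * diag_pow m t e * W)"

end

theory Submission
  imports Defs "Jordan_Normal_Form.Determinant"
begin

(* Write N_a(x) = (x - xi_0) ... (x - xi_(a-1)) for the Newton basis and d_a for the claimed
   valuations. Passing from monomials to the Newton basis is a unitriangular change of basis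
   turning V_xi into (N_a(xi_b))_(a,b); minimal ordering says precisely that N_a(xi_a), of
   valuation d_a, divides every N_a(xi_b). Hence this matrix is diag(t^d_a) times an upper
   triangular matrix with unit diagonal, which gives the elementary divisors. Interpolating N_i
   at xi_0, ..., xi_(j-1) expresses L_(i,j) by the integral quotients N_i(xi_k) / N_i(xi_i) and
   the L_(k,j) with i < k < j, so integrality follows by descending induction on i.
   Uniqueness of the exponents: the number of e_i >= n is the largest rank of a free direct
   summand that A maps into t^n T^m, an invariant of equivalence; for diagonal matrices it is
   computed by reducing determinants modulo t. *)

section \<open>Matrices over commutative rings\<close>

lemma invertible_mat_if_det_dvd_1:
  fixes A :: "'a::comm_ring_1 mat"
  assumes A: "A \<in> carrier_mat n n" and "det A dvd 1"
  shows "invertible_mat A"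
proof -
  obtain w where w: "1 = det A * w" using \<open>det A dvd 1\<close> by (auto elim: dvdE)
  define B where "B = w \<cdot>\<^sub>m adj_mat A"
  have B: "B \<in> carrier_mat n n" using adj_mat[OF A] unfolding B_def by simp
  have "A * B = w \<cdot>\<^sub>m (A * adj_mat A)"
    unfolding B_def using adj_mat[OF A] A by (simp add: mult_smult_distrib)
  also have "\<dots> = 1\<^sub>m n" using adj_mat[OF A] w by (auto intro!: eq_matI simp: mult.commute)
  finally have AB: "A * B = 1\<^sub>m n" .
  have "B * A = w \<cdot>\<^sub>m (adj_mat A * A)"
    unfolding B_def using adj_mat[OF A] A by (simp add: mult_smult_assoc_mat)
  also have "\<dots> = 1\<^sub>m n" using adj_mat[OF A] w by (auto intro!: eq_matI simp: mult.commute)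
  finally have BA: "B * A = 1\<^sub>m n" .
  show ?thesis unfolding invertible_mat_def inverts_mat_def using A B AB BA by auto
qed

lemma invertible_matE:
  fixes A :: "'a::semiring_1 mat"
  assumes "invertible_mat A" "A \<in> carrier_mat n n"
  obtains B where "B \<in> carrier_mat n n" "A * B = 1\<^sub>m n" "B * A = 1\<^sub>m n"
proof -
  from assms obtain B where "A * B = 1\<^sub>m (dim_row A)" "B * A = 1\<^sub>m (dim_row B)"
    unfolding invertible_mat_def inverts_mat_def by auto
  moreover have "dim_row B = n" "dim_col B = n" using calculation assms
    by (metis carrier_matD index_mult_mat(2,3) index_one_mat(2,3))+
  ultimately show ?thesis using that assms by auto
qed

lemma dvd_prod_diff_1:
  fixes f :: "'b \<Rightarrow> 'a::comm_ring_1"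
  assumes "finite S" "\<And>i. i \<in> S \<Longrightarrow> t dvd f i - 1"
  shows "t dvd prod f S - 1"
  using assms
proof (induction S rule: finite_induct)
  case (insert x F)
  have "prod f (insert x F) - 1 = (f x - 1) * prod f F + (prod f F - 1)"
    using insert by (simp add: algebra_simps)
  also have "t dvd \<dots>" using insert by (intro dvd_add) auto
  finally show ?case .
qed simp

lemma dvd_det_diff_1:
  fixes A :: "'a::comm_ring_1 mat"
  assumes A: "A \<in> carrier_mat k k"
    and cong: "\<And>i j. i < k \<Longrightarrow> j < k \<Longrightarrow> t dvd A $$ (i, j) - (if i = j then 1 else 0)"
  shows "t dvd det A - 1"
proof -
  let ?P = "{p. p permutes {0..<k}}"
  have "(\<Sum>p\<in>?P. (if p = id then 1 else 0 :: 'a)) = 1"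
    by (simp add: sum.delta' permutes_id finite_permutations)
  then have "det A - 1 =
      (\<Sum>p\<in>?P. signof p * (\<Prod>i=0..<k. A $$ (i, p i)) - (if p = id then 1 else 0))"
    unfolding det_def'[OF A] sum_subtractf by simp
  also have "t dvd \<dots>"
  proof (rule dvd_sum)
    fix p assume p: "p \<in> ?P"
    show "t dvd signof p * (\<Prod>i=0..<k. A $$ (i, p i)) - (if p = id then 1 else 0)"
    proof (cases "p = id")
      case True
      have "t dvd (\<Prod>i=0..<k. A $$ (i, p i)) - 1"
        by (rule dvd_prod_diff_1) (use cong True in force)+
      then show ?thesis using True by (simp add: sign_id)
    next
      case False
      then obtain i where i: "p i \<noteq> i" by (meson eq_id_iff)
      have ik: "i < k" using p i unfolding permutes_def by auto
      have "p i < k" using permutes_in_image[OF p[simplified]] ik by simp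
      then have "t dvd A $$ (i, p i)" using cong[OF ik] i by force
      also have "\<dots> dvd (\<Prod>i=0..<k. A $$ (i, p i))" by (rule dvd_prodI) (use ik in auto)
      finally show ?thesis using False by simp
    qed
  qed
  finally show ?thesis .
qed

lemma det_eq_0_if_zero_row:
  fixes A :: "'a::comm_ring_1 mat"
  assumes A: "A \<in> carrier_mat k k" and r: "r < k" and zero: "\<And>j. j < k \<Longrightarrow> A $$ (r, j) = 0"
  shows "det A = 0"
proof -
  have "(\<Prod>i=0..<k. A $$ (i, p i)) = 0" if p: "p permutes {0..<k}" for p
    using r zero permutes_in_image[OF p, of r] by (intro prod_zero) (auto intro!: bexI[of _ r])
  then show ?thesis unfolding det_def'[OF A] by simp
qed

text \<open>Modulo t the identity S * Z = 1 factors through the rows in J; padding to square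
  matrices, this would give a k \<times> k determinant that is 0 and 1 modulo t.\<close>

lemma card_ge_if_left_inverse_rows_dvd:
  fixes t :: "'a::comm_ring_1"
  assumes tu: "\<not> t dvd 1" and J: "J \<subseteq> {0..<m}"
    and Z: "Z \<in> carrier_mat m k" and S: "S \<in> carrier_mat k m" and SZ: "S * Z = 1\<^sub>m k"
    and dvd: "\<And>i b. i < m \<Longrightarrow> i \<notin> J \<Longrightarrow> b < k \<Longrightarrow> t dvd Z $$ (i, b)"
  shows "k \<le> card J"
proof (rule ccontr)
  define c where "c = card J"
  assume "\<not> k \<le> card J"
  then have ck: "c < k" unfolding c_def by simp
  have "finite J" using J finite_subset by blast
  then obtain h where h: "bij_betw h {0..<c} J" using ex_bij_betw_nat_finite c_def by blast
  define S' where "S' = mat k k (\<lambda>(a, l). if l < c then S $$ (a, h l) else 0)"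
  define Z' where "Z' = mat k k (\<lambda>(l, b). if l < c then Z $$ (h l, b) else 0)"
  have S': "S' \<in> carrier_mat k k" and Z': "Z' \<in> carrier_mat k k" unfolding S'_def Z'_def by auto
  have "det Z' = 0" by (rule det_eq_0_if_zero_row[OF Z' ck]) (simp add: Z'_def ck)
  then have det0: "det (S' * Z') = 0" using det_mult[OF S' Z'] by simp
  have cong: "t dvd (S' * Z') $$ (a, b) - (if a = b then 1 else 0)" if a: "a < k" and b: "b < k" for a b
  proof -
    have "(S' * Z') $$ (a, b) =
        (\<Sum>l = 0..<k. (if l < c then S $$ (a, h l) else 0) * (if l < c then Z $$ (h l, b) else 0))"
      using a b by (simp add: S'_def Z'_def scalar_prod_def)
    also have "\<dots> = (\<Sum>l = 0..<c. S $$ (a, h l) * Z $$ (h l, b))"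
      by (rule sum.mono_neutral_cong_right) (use ck in auto)
    also have "\<dots> = (\<Sum>i\<in>J. S $$ (a, i) * Z $$ (i, b))" by (rule sum.reindex_bij_betw[OF h])
    finally have SZ'_eq: "(S' * Z') $$ (a, b) = (\<Sum>i\<in>J. S $$ (a, i) * Z $$ (i, b))" .
    have "(if a = b then 1 else 0) = (S * Z) $$ (a, b)" using SZ a b by simp
    also have "\<dots> = (\<Sum>i = 0..<m. S $$ (a, i) * Z $$ (i, b))"
      using a b S Z by (simp add: scalar_prod_def)
    also have "\<dots> = (S' * Z') $$ (a, b) + (\<Sum>i\<in>{0..<m} - J. S $$ (a, i) * Z $$ (i, b))"
      unfolding SZ'_eq using sum.subset_diff[OF J] by (simp add: add.commute)
    finally have "(S' * Z') $$ (a, b) - (if a = b then 1 else 0) =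
        - (\<Sum>i\<in>{0..<m} - J. S $$ (a, i) * Z $$ (i, b))" by simp
    moreover have "t dvd (\<Sum>i\<in>{0..<m} - J. S $$ (a, i) * Z $$ (i, b))"
      by (rule dvd_sum) (use dvd b in auto)
    ultimately show ?thesis by simp
  qed
  have "t dvd det (S' * Z') - 1" by (rule dvd_det_diff_1[OF mult_carrier_mat[OF S' Z'] cong])
  then show False using det0 tu by simp
qed

section \<open>Uniqueness of elementary divisor exponents\<close>

lemma diag_pow_carrier [simp]:
  "diag_pow m t e \<in> carrier_mat m m" "dim_row (diag_pow m t e) = m" "dim_col (diag_pow m t e) = m"
  by (simp_all add: diag_pow_def)

lemma index_diag_pow_mult:
  assumes "Z \<in> carrier_mat m k" "i < m" "l < k"
  shows "(diag_pow m t e * Z) $$ (i, l) = t ^ e i * Z $$ (i, l)"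
proof -
  have "(diag_pow m t e * Z) $$ (i, l) = (\<Sum>c = 0..<m. (if i = c then t ^ e i else 0) * Z $$ (c, l))"
    using assms by (simp add: diag_pow_def scalar_prod_def)
  also have "\<dots> = (\<Sum>c = 0..<m. if i = c then t ^ e i * Z $$ (c, l) else 0)"
    by (rule sum.cong) auto
  finally show ?thesis using assms by simp
qed

text \<open>The columns of Z span a free direct summand of rank k of the module of columns
  (S is a left inverse of Z), and A maps this summand into t^n times the module.\<close>

definition annihilates_summand_mod_pow :: "'a::comm_ring_1 \<Rightarrow> nat \<Rightarrow> 'a mat \<Rightarrow> nat \<Rightarrow> nat \<Rightarrow> bool"
  where "annihilates_summand_mod_pow t m A n k \<longleftrightarrow>
    (\<exists>Z S Z'. Z \<in> carrier_mat m k \<and> S \<in> carrier_mat k m \<and> Z' \<in> carrier_mat m k \<and>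
      A * Z = t ^ n \<cdot>\<^sub>m Z' \<and> S * Z = 1\<^sub>m k)"

lemma annihilates_summand_mod_pow_mult:
  fixes A :: "'a::comm_ring_1 mat"
  assumes A: "A \<in> carrier_mat m m" and X: "X \<in> carrier_mat m m" and Y: "Y \<in> carrier_mat m m"
    and Y': "Y' \<in> carrier_mat m m" and YY': "Y * Y' = 1\<^sub>m m"
    and "annihilates_summand_mod_pow t m A n k"
  shows "annihilates_summand_mod_pow t m (X * A * Y) n k"
proof -
  from assms(6) obtain Z S Z' where Z: "Z \<in> carrier_mat m k" and S: "S \<in> carrier_mat k m"
    and Z': "Z' \<in> carrier_mat m k" and AZ: "A * Z = t ^ n \<cdot>\<^sub>m Z'" and SZ: "S * Z = 1\<^sub>m k"
    unfolding annihilates_summand_mod_pow_def by blast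
  have "Y * (Y' * Z) = Y * Y' * Z" by (rule assoc_mult_mat[symmetric, OF Y Y' Z])
  then have YY'Z: "Y * (Y' * Z) = Z" using YY' Z by simp
  have "X * A * Y * (Y' * Z) = X * A * (Y * (Y' * Z))"
    using X A Y Y' Z by (intro assoc_mult_mat) auto
  also have "\<dots> = X * (A * Z)" using YY'Z X A Z by (simp add: assoc_mult_mat)
  also have "\<dots> = t ^ n \<cdot>\<^sub>m (X * Z')" using AZ X Z' by (simp add: mult_smult_distrib)
  finally have "X * A * Y * (Y' * Z) = t ^ n \<cdot>\<^sub>m (X * Z')" .
  moreover have "S * Y * (Y' * Z) = 1\<^sub>m k"
    using assoc_mult_mat[OF S Y mult_carrier_mat[OF Y' Z]] YY'Z SZ by simp
  ultimately show ?thesis unfolding annihilates_summand_mod_pow_def using Y' Z S Y X Z'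
    by (intro exI[of _ "Y' * Z"] exI[of _ "S * Y"] exI[of _ "X * Z'"]) auto
qed

lemma annihilates_summand_mod_pow_equivalent:
  fixes A :: "'a::comm_ring_1 mat"
  assumes U: "U \<in> carrier_mat m m" and W: "W \<in> carrier_mat m m" and D: "D \<in> carrier_mat m m"
    and "invertible_mat U" "invertible_mat W" and A: "A = U * D * W"
  shows "annihilates_summand_mod_pow t m A n k \<longleftrightarrow> annihilates_summand_mod_pow t m D n k"
proof -
  obtain U' where U': "U' \<in> carrier_mat m m" "U * U' = 1\<^sub>m m" "U' * U = 1\<^sub>m m"
    using invertible_matE[OF \<open>invertible_mat U\<close> U] by blast
  obtain W' where W': "W' \<in> carrier_mat m m" "W * W' = 1\<^sub>m m" "W' * W = 1\<^sub>m m"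
    using invertible_matE[OF \<open>invertible_mat W\<close> W] by blast
  have Ac: "A \<in> carrier_mat m m" using A U W D by simp
  have "A * W' = U * D * (W * W')" unfolding A using U D W W' by (intro assoc_mult_mat) auto
  then have AW': "A * W' = U * D" using W'(2) U D by simp
  have "U' * A * W' = U' * (A * W')" by (rule assoc_mult_mat[OF U'(1) Ac W'(1)])
  also have "\<dots> = U' * U * D" unfolding AW' by (rule assoc_mult_mat[symmetric, OF U'(1) U D])
  finally have D_eq: "U' * A * W' = D" using U'(3) D by simp
  show ?thesis
    using annihilates_summand_mod_pow_mult[OF D U W W'(1,2), of t n k]
      annihilates_summand_mod_pow_mult[OF Ac U'(1) W'(1) W W'(3), of t n k]
    unfolding A[symmetric] D_eq by blast
qed

lemma annihilates_summand_mod_pow_diag_powI: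
  fixes t :: "'a::comm_ring_1"
  assumes k: "k \<le> card {i. i < m \<and> n \<le> e i}"
  shows "annihilates_summand_mod_pow t m (diag_pow m t e) n k"
proof -
  define J where "J = {i. i < m \<and> n \<le> e i}"
  obtain h where h: "bij_betw h {0..<card J} J"
    using ex_bij_betw_nat_finite[of J] unfolding J_def by auto
  have hJ: "l < k \<Longrightarrow> h l < m \<and> n \<le> e (h l)" for l
    using h k bij_betwE unfolding J_def by fastforce
  have hinj: "a < k \<Longrightarrow> b < k \<Longrightarrow> h a = h b \<Longrightarrow> a = b" for a b
    using h k unfolding J_def bij_betw_def inj_on_def by auto
  define Z where "Z = mat m k (\<lambda>(i, l). if i = h l then (1::'a) else 0)"
  define S where "S = mat k m (\<lambda>(l, i). if i = h l then (1::'a) else 0)"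
  define Z' where "Z' = mat m k (\<lambda>(i, l). if i = h l then t ^ (e i - n) else 0)"
  have Z: "Z \<in> carrier_mat m k" and S: "S \<in> carrier_mat k m" and Z': "Z' \<in> carrier_mat m k"
    unfolding Z_def S_def Z'_def by auto
  have "diag_pow m t e * Z = t ^ n \<cdot>\<^sub>m Z'"
  proof (rule eq_matI)
    fix i l assume "i < dim_row (t ^ n \<cdot>\<^sub>m Z')" "l < dim_col (t ^ n \<cdot>\<^sub>m Z')"
    then have i: "i < m" and l: "l < k" using Z' by auto
    have "i = h l \<Longrightarrow> t ^ e i = t ^ n * t ^ (e i - n)" using hJ[OF l] by (simp flip: power_add)
    then show "(diag_pow m t e * Z) $$ (i, l) = (t ^ n \<cdot>\<^sub>m Z') $$ (i, l)"
      using index_diag_pow_mult[OF Z i l] i l by (simp add: Z_def Z'_def)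
  qed (use Z Z' in auto)
  moreover have "S * Z = 1\<^sub>m k"
  proof (rule eq_matI)
    fix a b assume "a < dim_row (1\<^sub>m k :: 'a mat)" "b < dim_col (1\<^sub>m k :: 'a mat)"
    then have a: "a < k" and b: "b < k" by auto
    have "(S * Z) $$ (a, b) = (\<Sum>i = 0..<m. (if i = h a then 1 else 0) * (if i = h b then 1 else 0))"
      using a b S Z by (simp add: S_def Z_def scalar_prod_def)
    also have "\<dots> = (\<Sum>i = 0..<m. if i = h a then (if h a = h b then 1 else 0) else 0)"
      by (rule sum.cong) auto
    also have "\<dots> = (if a = b then 1 else 0)" using hJ[OF a] hinj[OF a b] by auto
    finally show "(S * Z) $$ (a, b) = 1\<^sub>m k $$ (a, b)" using a b by simp
  qed (use S Z in auto)
  ultimately show ?thesis unfolding annihilates_summand_mod_pow_def using Z S Z' by blast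
qed

lemma annihilates_summand_mod_pow_diag_powD:
  fixes t :: "'a::idom"
  assumes t0: "t \<noteq> 0" and tu: "\<not> t dvd 1"
    and "annihilates_summand_mod_pow t m (diag_pow m t e) n k"
  shows "k \<le> card {i. i < m \<and> n \<le> e i}"
proof -
  from assms(3) obtain Z S Z' where Z: "Z \<in> carrier_mat m k" and S: "S \<in> carrier_mat k m"
    and Z': "Z' \<in> carrier_mat m k" and DZ: "diag_pow m t e * Z = t ^ n \<cdot>\<^sub>m Z'"
    and SZ: "S * Z = 1\<^sub>m k"
    unfolding annihilates_summand_mod_pow_def by blast
  show ?thesis
  proof (rule card_ge_if_left_inverse_rows_dvd[OF tu _ Z S SZ])
    fix i b assume i: "i < m" "i \<notin> {i. i < m \<and> n \<le> e i}" and b: "b < k"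
    then have en: "e i < n" by simp
    have "t ^ e i * Z $$ (i, b) = t ^ n * Z' $$ (i, b)"
      using index_diag_pow_mult[OF Z i(1) b, of t e] DZ i b Z' by simp
    also have "\<dots> = t ^ e i * (t ^ (n - e i) * Z' $$ (i, b))"
      using en by (simp add: mult.assoc flip: power_add)
    finally have "Z $$ (i, b) = t ^ (n - e i) * Z' $$ (i, b)" using t0 by simp
    then show "t dvd Z $$ (i, b)" using en by (simp add: dvd_power)
  qed auto
qed

lemma le_iff_card_ge_if_mono:
  assumes mono: "\<And>i j. i \<le> j \<Longrightarrow> j < m \<Longrightarrow> e i \<le> (e j :: nat)" and i: "i < m"
  shows "n \<le> e i \<longleftrightarrow> m - i \<le> card {j. j < m \<and> n \<le> e j}"
proof
  assume "n \<le> e i"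
  then have "{i..<m} \<subseteq> {j. j < m \<and> n \<le> e j}" using mono by (auto intro: order_trans)
  then have "card {i..<m} \<le> card {j. j < m \<and> n \<le> e j}" by (intro card_mono) auto
  then show "m - i \<le> card {j. j < m \<and> n \<le> e j}" by simp
next
  assume card: "m - i \<le> card {j. j < m \<and> n \<le> e j}"
  show "n \<le> e i"
  proof (rule ccontr)
    assume "\<not> n \<le> e i"
    then have "{j. j < m \<and> n \<le> e j} \<subseteq> {Suc i..<m}"
      using mono[of _ i] i by (force simp: not_less_eq_eq)
    then have "card {j. j < m \<and> n \<le> e j} \<le> card {Suc i..<m}" by (intro card_mono) auto
    then show False using card i by simp
  qed
qed

lemma elementary_divisor_exponents_unique:
  fixes t :: "'a::idom"
  assumes t0: "t \<noteq> 0" and tu: "\<not> t dvd 1"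
    and e: "elementary_divisor_exponents t m A e" and d: "elementary_divisor_exponents t m A d"
    and i: "i < m"
  shows "e i = d i"
proof -
  have count: "annihilates_summand_mod_pow t m A n k \<longleftrightarrow> k \<le> card {j. j < m \<and> n \<le> f j}"
    if f: "elementary_divisor_exponents t m A f" for f n k
  proof -
    obtain U W where "U \<in> carrier_mat m m" "W \<in> carrier_mat m m" "invertible_mat U"
      "invertible_mat W" "A = U * diag_pow m t f * W"
      using f unfolding elementary_divisor_exponents_def by blast
    then have "annihilates_summand_mod_pow t m A n k \<longleftrightarrow>
        annihilates_summand_mod_pow t m (diag_pow m t f) n k"
      by (intro annihilates_summand_mod_pow_equivalent) auto
    then show ?thesis
      using annihilates_summand_mod_pow_diag_powI annihilates_summand_mod_pow_diag_powD[OF t0 tu]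
      by blast
  qed
  have "card {j. j < m \<and> n \<le> e j} = card {j. j < m \<and> n \<le> d j}" for n
    using count[OF e, of n] count[OF d, of n] by (meson order_refl le_antisym)
  moreover have "n \<le> f i \<longleftrightarrow> m - i \<le> card {j. j < m \<and> n \<le> f j}"
    if "elementary_divisor_exponents t m A f" for f n
    using that i unfolding elementary_divisor_exponents_def by (intro le_iff_card_ge_if_mono) auto
  ultimately have "n \<le> e i \<longleftrightarrow> n \<le> d i" for n using e d by metis
  then show ?thesis by (metis le_antisym order_refl)
qed

section \<open>Newton basis and Lagrange interpolation\<close>

definition newton_poly :: "(nat \<Rightarrow> 'a::comm_ring_1) \<Rightarrow> nat \<Rightarrow> 'a poly"
  where "newton_poly x a = (\<Prod>k<a. [:- x k, 1:])"

lemma poly_newton_poly: "poly (newton_poly x a) y = (\<Prod>k<a. y - x k)"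
  by (simp add: newton_poly_def poly_prod)

lemma poly_newton_poly_eq_0: "b < a \<Longrightarrow> poly (newton_poly x a) (x b) = 0"
  unfolding poly_newton_poly by (intro prod_zero) auto

lemma degree_newton_poly [simp]: "degree (newton_poly (x :: nat \<Rightarrow> 'a::idom) a) = a"
  unfolding newton_poly_def by (subst degree_prod_eq_sum_degree) auto

lemma coeff_newton_poly_self [simp]: "coeff (newton_poly (x :: nat \<Rightarrow> 'a::idom) a) a = 1"
proof -
  have "lead_coeff (newton_poly x a) = 1" unfolding newton_poly_def lead_coeff_prod by simp
  then show ?thesis by simp
qed

lemma lagrange_interpolation:
  fixes x :: "nat \<Rightarrow> 'a::field" and p :: "'a poly"
  assumes inj: "inj_on x {..<j}" and deg: "degree p < j"
  shows "poly p y = (\<Sum>k<j. poly p (x k) *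
    ((\<Prod>l\<in>{..<j} - {k}. y - x l) / (\<Prod>l\<in>{..<j} - {k}. x k - x l)))"
    (is "_ = ?r y")
proof -
  define q where "q = (\<Sum>k<j. Polynomial.smult (poly p (x k) / (\<Prod>l\<in>{..<j} - {k}. x k - x l))
    (\<Prod>l\<in>{..<j} - {k}. [:- x l, 1:]))"
  have poly_q: "poly q z = ?r z" for z
    unfolding q_def by (simp add: poly_sum poly_prod)
  have "degree (\<Prod>l\<in>{..<j} - {k}. [:- x l, 1:]) \<le> j - 1" if "k < j" for k
    using that by (subst degree_prod_eq_sum_degree) auto
  then have "degree q \<le> j - 1"
    unfolding q_def by (intro degree_sum_le) (auto intro: order_trans[OF degree_smult_le])
  then have deg_q: "degree q < j" using deg by linarith
  have q_nodes: "poly q (x i) = poly p (x i)" if i: "i < j" for i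
  proof -
    have nonzero: "(\<Prod>l\<in>{..<j} - {i}. x i - x l) \<noteq> 0" using inj i by (auto simp: inj_on_def)
    have vanish: "(\<Prod>l\<in>{..<j} - {k}. x i - x l) = 0" if "k \<noteq> i" for k
      using i that by (intro prod_zero bexI[of _ i]) auto
    have "?r (x i) = (\<Sum>k<j. if k = i then poly p (x i) else 0)"
      using nonzero vanish by (intro sum.cong) auto
    also have "\<dots> = poly p (x i)" using i by simp
    finally show ?thesis unfolding poly_q .
  qed
  have "q = p"
  proof (rule poly_eqI_degree)
    show "poly q z = poly p z" if "z \<in> x ` {..<j}" for z using that q_nodes by blast
    show "degree q < card (x ` {..<j})" using deg_q card_image[OF inj] by simp
    show "degree p < card (x ` {..<j})" using deg card_image[OF inj] by simp
  qed
  then show ?thesis using poly_q[of y] by simp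
qed

definition newton_coeff_mat :: "nat \<Rightarrow> (nat \<Rightarrow> 'a::comm_ring_1) \<Rightarrow> 'a mat"
  where "newton_coeff_mat m x = mat m m (\<lambda>(a, c). coeff (newton_poly x a) c)"

definition newton_mat :: "nat \<Rightarrow> (nat \<Rightarrow> 'a::comm_ring_1) \<Rightarrow> 'a mat"
  where "newton_mat m x = mat m m (\<lambda>(a, b). poly (newton_poly x a) (x b))"

lemma newton_coeff_mat_carrier [simp]: "newton_coeff_mat m x \<in> carrier_mat m m"
  by (simp add: newton_coeff_mat_def)

lemma newton_coeff_mat_mult_vandermonde:
  fixes x :: "nat \<Rightarrow> 'a::idom"
  shows "newton_coeff_mat m x * vandermonde m x = newton_mat m x"
proof (rule eq_matI)
  fix a b assume "a < dim_row (newton_mat m x)" "b < dim_col (newton_mat m x)"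
  then have a: "a < m" and b: "b < m" by (auto simp: newton_mat_def)
  have "(newton_coeff_mat m x * vandermonde m x) $$ (a, b) =
      (\<Sum>c = 0..<m. coeff (newton_poly x a) c * x b ^ c)"
    using a b by (simp add: newton_coeff_mat_def vandermonde_def scalar_prod_def)
  also have "\<dots> = (\<Sum>c\<le>degree (newton_poly x a). coeff (newton_poly x a) c * x b ^ c)"
    by (rule sum.mono_neutral_cong_right) (use a in \<open>auto simp: coeff_eq_0\<close>)
  also have "\<dots> = newton_mat m x $$ (a, b)" using a b by (simp add: poly_altdef newton_mat_def)
  finally show "(newton_coeff_mat m x * vandermonde m x) $$ (a, b) = newton_mat m x $$ (a, b)" .
qed (auto simp: newton_coeff_mat_def newton_mat_def vandermonde_def)

lemma prod_list_map_upt: "prod_list (map f [0..<m]) = prod f {0..<m}"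
  by (induction m) (auto simp: mult.commute)

lemma invertible_newton_coeff_mat:
  fixes x :: "nat \<Rightarrow> 'a::idom"
  shows "invertible_mat (newton_coeff_mat m x)"
proof (rule invertible_mat_if_det_dvd_1[OF newton_coeff_mat_carrier])
  have "det (newton_coeff_mat m x) = prod_list (diag_mat (newton_coeff_mat m x))"
    by (rule det_lower_triangular[OF _ newton_coeff_mat_carrier])
      (auto simp: newton_coeff_mat_def coeff_eq_0)
  also have "\<dots> = 1" by (simp add: diag_mat_def prod_list_map_upt newton_coeff_mat_def)
  finally show "det (newton_coeff_mat m x) dvd 1" by simp
qed

lemma prod_dvd_1:
  fixes f :: "'b \<Rightarrow> 'a::comm_semiring_1"
  shows "\<forall>i\<in>S. f i dvd 1 \<Longrightarrow> prod f S dvd 1"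
  by (induction S rule: infinite_finite_induct) (auto intro: mult_dvd_mono[of _ 1 _ 1, simplified])

lemma to_fract_prod: "to_fract (prod f S) = (\<Prod>k\<in>S. to_fract (f k))"
  by (induction S rule: infinite_finite_induct) simp_all

lemma to_fract_poly_newton_poly:
  "to_fract (poly (newton_poly x a) y) = poly (newton_poly (to_fract \<circ> x) a) (to_fract y)"
  by (simp add: poly_newton_poly to_fract_prod)

lemma range_to_fract_0 [simp]: "0 \<in> range to_fract"
  by (metis rangeI to_fract_0)

lemma range_to_fract_add: "a \<in> range to_fract \<Longrightarrow> b \<in> range to_fract \<Longrightarrow> a + b \<in> range to_fract"
  by (elim rangeE) (metis rangeI to_fract_add)

lemma range_to_fract_diff: "a \<in> range to_fract \<Longrightarrow> b \<in> range to_fract \<Longrightarrow> a - b \<in> range to_fract"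
  by (elim rangeE) (metis rangeI to_fract_diff)

lemma range_to_fract_mult: "a \<in> range to_fract \<Longrightarrow> b \<in> range to_fract \<Longrightarrow> a * b \<in> range to_fract"
  by (elim rangeE) (metis rangeI to_fract_mult)

lemma range_to_fract_sum: "\<forall>k\<in>S. f k \<in> range to_fract \<Longrightarrow> sum f S \<in> range to_fract"
  by (induction S rule: infinite_finite_induct) (auto intro: range_to_fract_add)

definition lagrange_coeff :: "(nat \<Rightarrow> 'a::idom) \<Rightarrow> nat \<Rightarrow> nat \<Rightarrow> 'a fract"
  where "lagrange_coeff \<xi> j i =
    (\<Prod>k\<in>{..<j} - {i}. to_fract (\<xi> j - \<xi> k)) / (\<Prod>k\<in>{..<j} - {i}. to_fract (\<xi> i - \<xi> k))"

lemma index_L_mat: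
  "i < m \<Longrightarrow> j < m \<Longrightarrow> L_mat m \<xi> $$ (i, j) = (if i < j then lagrange_coeff \<xi> j i else 0)"
  by (simp add: L_mat_def lagrange_coeff_def)

section \<open>The Vandermonde matrix over a discrete valuation ring\<close>

lemma dvr_uniformizer_valuationD:
  assumes "dvr_uniformizer_valuation t v"
  shows "t \<noteq> 0" "\<not> t dvd 1" "x \<noteq> 0 \<Longrightarrow> \<exists>u. u dvd 1 \<and> x = u * t ^ v x"
  using assms unfolding dvr_uniformizer_valuation_def by simp_all

lemma dvr_prod_eq_unit_mult_pow:
  fixes t :: "'a::idom"
  assumes dvr: "dvr_uniformizer_valuation t v" and "finite S" and "\<forall>k\<in>S. f k \<noteq> 0"
  shows "\<exists>u. u dvd 1 \<and> prod f S = u * t ^ (\<Sum>k\<in>S. v (f k))"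
  using assms(2,3)
proof (induction S rule: finite_induct)
  case empty
  show ?case by (intro exI[of _ 1]) simp
next
  case (insert x F)
  then obtain u where u: "u dvd 1" "prod f F = u * t ^ (\<Sum>k\<in>F. v (f k))" by auto
  obtain w where w: "w dvd 1" "f x = w * t ^ v (f x)"
    using dvr_uniformizer_valuationD(3)[OF dvr] insert.prems by auto
  have "prod f (insert x F) = (w * u) * t ^ (\<Sum>k\<in>insert x F. v (f k))"
    using insert u w by (simp add: power_add algebra_simps)
  moreover have "w * u dvd 1" using u w by simp
  ultimately show ?case by blast
qed

abbreviation newton_valuation :: "('a::idom \<Rightarrow> nat) \<Rightarrow> (nat \<Rightarrow> 'a) \<Rightarrow> nat \<Rightarrow> nat"
  where "newton_valuation v \<xi> a \<equiv> \<Sum>j<a. v (\<xi> a - \<xi> j)"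

context
  fixes t :: "'a::idom" and v :: "'a \<Rightarrow> nat" and m :: nat and \<xi> :: "nat \<Rightarrow> 'a"
  assumes dvr: "dvr_uniformizer_valuation t v" and mo: "minimally_ordered v m \<xi>"
begin

lemma nodes_diff_nonzero:
  assumes "a < m" "b < m" "a \<noteq> b"
  shows "\<xi> a - \<xi> b \<noteq> 0"
proof -
  have "inj_on \<xi> {..<m}" using mo by (simp add: minimally_ordered_def)
  then show ?thesis using assms by (auto dest: inj_onD)
qed

lemma newton_valuation_le:
  assumes "j < k" "k < m"
  shows "newton_valuation v \<xi> j \<le> (\<Sum>i<j. v (\<xi> k - \<xi> i))"
proof -
  have "j < m" using assms by simp
  then show ?thesis using mo assms unfolding minimally_ordered_def by blast
qed

lemma poly_newton_poly_node_eq_unit_mult: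
  assumes "a \<le> b" "b < m"
  shows "\<exists>u. u dvd 1 \<and> poly (newton_poly \<xi> a) (\<xi> b) = u * t ^ (\<Sum>j<a. v (\<xi> b - \<xi> j))"
  unfolding poly_newton_poly using assms nodes_diff_nonzero
  by (intro dvr_prod_eq_unit_mult_pow[OF dvr]) auto

lemma newton_diag_nonzero:
  assumes "a < m"
  shows "poly (newton_poly \<xi> a) (\<xi> a) \<noteq> 0"
proof -
  obtain u where "u dvd 1" "poly (newton_poly \<xi> a) (\<xi> a) = u * t ^ newton_valuation v \<xi> a"
    using poly_newton_poly_node_eq_unit_mult[OF order_refl assms] by blast
  moreover have "u \<noteq> 0" using \<open>u dvd 1\<close> by auto
  ultimately show ?thesis using dvr_uniformizer_valuationD(1)[OF dvr] by simp
qed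

lemma newton_diag_dvd:
  assumes a: "a < m" and b: "b < m"
  shows "poly (newton_poly \<xi> a) (\<xi> a) dvd poly (newton_poly \<xi> a) (\<xi> b)"
proof (cases "a \<le> b")
  case True
  obtain u where u: "u dvd 1" "poly (newton_poly \<xi> a) (\<xi> a) = u * t ^ newton_valuation v \<xi> a"
    using poly_newton_poly_node_eq_unit_mult[OF order_refl a] by blast
  obtain w where w: "poly (newton_poly \<xi> a) (\<xi> b) = w * t ^ (\<Sum>j<a. v (\<xi> b - \<xi> j))"
    using poly_newton_poly_node_eq_unit_mult[OF True b] by blast
  have "newton_valuation v \<xi> a \<le> (\<Sum>j<a. v (\<xi> b - \<xi> j))"
    using newton_valuation_le[OF _ b] True by (cases "a = b") auto
  then have "t ^ newton_valuation v \<xi> a dvd w * t ^ (\<Sum>j<a. v (\<xi> b - \<xi> j))"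
    by (intro dvd_mult le_imp_power_dvd)
  then show ?thesis unfolding u(2) w mult_unit_dvd_iff'[OF u(1)] .
next
  case False
  then show ?thesis by (simp add: poly_newton_poly_eq_0)
qed

lemma newton_valuation_mono:
  assumes "i \<le> j" "j < m"
  shows "newton_valuation v \<xi> i \<le> newton_valuation v \<xi> j"
proof (cases "i = j")
  case False
  then have "newton_valuation v \<xi> i \<le> (\<Sum>k<i. v (\<xi> j - \<xi> k))"
    using newton_valuation_le assms by simp
  also have "\<dots> \<le> newton_valuation v \<xi> j" using assms by (intro sum_mono2) auto
  finally show ?thesis .
qed simp

lemma pow_newton_valuation_dvd:
  assumes a: "a < m" and b: "b < m"
  shows "t ^ newton_valuation v \<xi> a dvd poly (newton_poly \<xi> a) (\<xi> b)"
proof -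
  obtain u where "poly (newton_poly \<xi> a) (\<xi> a) = u * t ^ newton_valuation v \<xi> a"
    using poly_newton_poly_node_eq_unit_mult[OF order_refl a] by blast
  then show ?thesis using newton_diag_dvd[OF a b] by (metis dvd_triv_right dvd_trans)
qed

lemma newton_mat_eq_diag_pow_mult:
  obtains W where "W \<in> carrier_mat m m" "invertible_mat W"
    "newton_mat m \<xi> = diag_pow m t (newton_valuation v \<xi>) * W"
proof -
  have t0: "t \<noteq> 0" by (rule dvr_uniformizer_valuationD(1)[OF dvr])
  have "\<forall>a<m. \<forall>b<m. \<exists>q. poly (newton_poly \<xi> a) (\<xi> b) = t ^ newton_valuation v \<xi> a * q"
    using pow_newton_valuation_dvd unfolding dvd_def by blast
  then obtain w where w: "\<And>a b. a < m \<Longrightarrow> b < m \<Longrightarrow>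
      poly (newton_poly \<xi> a) (\<xi> b) = t ^ newton_valuation v \<xi> a * w a b"
    by metis
  define W where "W = mat m m (\<lambda>(a, b). w a b)"
  have W: "W \<in> carrier_mat m m" by (simp add: W_def)
  have "newton_mat m \<xi> = diag_pow m t (newton_valuation v \<xi>) * W"
  proof (rule eq_matI)
    fix a b assume "a < dim_row (diag_pow m t (newton_valuation v \<xi>) * W)"
      "b < dim_col (diag_pow m t (newton_valuation v \<xi>) * W)"
    then have a: "a < m" and b: "b < m" using W by auto
    show "newton_mat m \<xi> $$ (a, b) = (diag_pow m t (newton_valuation v \<xi>) * W) $$ (a, b)"
      unfolding index_diag_pow_mult[OF W a b] using a b w by (simp add: newton_mat_def W_def)
  qed (use W in \<open>simp_all add: newton_mat_def\<close>)
  moreover have "upper_triangular W"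
    unfolding upper_triangular_def
  proof (intro allI impI)
    fix a b assume "a < dim_row W" "b < a"
    then show "W $$ (a, b) = 0"
      using w[of a b] poly_newton_poly_eq_0[of b a \<xi>] t0 W by (simp add: W_def)
  qed
  moreover have "w a a dvd 1" if a: "a < m" for a
  proof -
    obtain u where "u dvd 1" "poly (newton_poly \<xi> a) (\<xi> a) = u * t ^ newton_valuation v \<xi> a"
      using poly_newton_poly_node_eq_unit_mult[OF order_refl a] by blast
    then show ?thesis using w[OF a a] t0 by (simp add: mult.commute)
  qed
  then have "det W dvd 1"
    using det_upper_triangular[OF \<open>upper_triangular W\<close> W] W
    by (simp add: diag_mat_def prod_list_map_upt W_def prod_dvd_1)
  ultimately show ?thesis using that W invertible_mat_if_det_dvd_1[OF W] by blast
qed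

lemma elementary_divisor_exponents_vandermonde:
  "elementary_divisor_exponents t m (vandermonde m \<xi>) (newton_valuation v \<xi>)"
proof -
  let ?P = "newton_coeff_mat m \<xi>"
  obtain P' where P': "P' \<in> carrier_mat m m" "?P * P' = 1\<^sub>m m" "P' * ?P = 1\<^sub>m m"
    using invertible_matE[OF invertible_newton_coeff_mat newton_coeff_mat_carrier] by blast
  have "invertible_mat P'"
    using P' carrier_matD[OF newton_coeff_mat_carrier[of m \<xi>]]
    unfolding invertible_mat_def inverts_mat_def by (auto intro!: exI[of _ ?P])
  obtain W where W: "W \<in> carrier_mat m m" "invertible_mat W"
    "newton_mat m \<xi> = diag_pow m t (newton_valuation v \<xi>) * W"
    using newton_mat_eq_diag_pow_mult by blast
  have V: "vandermonde m \<xi> \<in> carrier_mat m m" by (simp add: vandermonde_def)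
  have "vandermonde m \<xi> = P' * ?P * vandermonde m \<xi>" using P'(3) V by simp
  also have "\<dots> = P' * newton_mat m \<xi>"
    using assoc_mult_mat[OF P'(1) newton_coeff_mat_carrier V]
    by (simp add: newton_coeff_mat_mult_vandermonde)
  also have "\<dots> = P' * diag_pow m t (newton_valuation v \<xi>) * W"
    unfolding W(3) by (rule assoc_mult_mat[symmetric, OF P'(1) diag_pow_carrier(1) W(1)])
  finally have "\<exists>U W. U \<in> carrier_mat m m \<and> W \<in> carrier_mat m m \<and>
      invertible_mat U \<and> invertible_mat W \<and>
      vandermonde m \<xi> = U * diag_pow m t (newton_valuation v \<xi>) * W"
    using P'(1) \<open>invertible_mat P'\<close> W(1,2) by blast
  moreover have "\<forall>i j. i \<le> j \<and> j < m \<longrightarrow> newton_valuation v \<xi> i \<le> newton_valuation v \<xi> j"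
    using newton_valuation_mono by simp
  ultimately show ?thesis unfolding elementary_divisor_exponents_def by (rule conjI[rotated])
qed

lemma newton_lagrange_identity:
  assumes "i < j" "j < m"
  shows "(\<Sum>k<j. to_fract (poly (newton_poly \<xi> i) (\<xi> k)) * lagrange_coeff \<xi> j k) =
    to_fract (poly (newton_poly \<xi> i) (\<xi> j))"
proof -
  have "inj_on (to_fract \<circ> \<xi>) {..<j}"
  proof (rule inj_onI)
    fix a b assume "a \<in> {..<j}" "b \<in> {..<j}" "(to_fract \<circ> \<xi>) a = (to_fract \<circ> \<xi>) b"
    then show "a = b" using nodes_diff_nonzero[of a b] assms by (cases "a = b") auto
  qed
  from lagrange_interpolation[OF this, of "newton_poly (to_fract \<circ> \<xi>) i" "to_fract (\<xi> j)"]
  show ?thesis using assms by (simp add: to_fract_poly_newton_poly lagrange_coeff_def)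
qed

lemma newton_quotient_integral:
  assumes "i < m" "b < m"
  shows "to_fract (poly (newton_poly \<xi> i) (\<xi> b)) / to_fract (poly (newton_poly \<xi> i) (\<xi> i))
    \<in> range to_fract"
proof -
  obtain q where "poly (newton_poly \<xi> i) (\<xi> b) = poly (newton_poly \<xi> i) (\<xi> i) * q"
    using newton_diag_dvd[OF assms] by (elim dvdE)
  then show ?thesis using newton_diag_nonzero[OF assms(1)] by simp
qed

lemma lagrange_coeff_integral:
  assumes j: "j < m"
  shows "i < j \<Longrightarrow> lagrange_coeff \<xi> j i \<in> range to_fract"
proof (induction "j - i" arbitrary: i rule: less_induct)
  case less
  define N where "N k = to_fract (poly (newton_poly \<xi> i) (\<xi> k))" for k
  have i: "i < m" using less.prems j by simp
  have Ni: "N i \<noteq> 0" unfolding N_def using newton_diag_nonzero[OF i] by simp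
  have "N j = (\<Sum>k<j. N k * lagrange_coeff \<xi> j k)"
    unfolding N_def by (rule newton_lagrange_identity[OF less.prems j, symmetric])
  also have "\<dots> = N i * lagrange_coeff \<xi> j i + (\<Sum>k\<in>{..<j} - {i}. N k * lagrange_coeff \<xi> j k)"
    using less.prems by (simp add: sum.remove)
  finally have "lagrange_coeff \<xi> j i = (N j - (\<Sum>k\<in>{..<j} - {i}. N k * lagrange_coeff \<xi> j k)) / N i"
    using Ni by (simp add: field_simps)
  also have "\<dots> = N j / N i - (\<Sum>k\<in>{..<j} - {i}. N k / N i * lagrange_coeff \<xi> j k)"
    by (simp add: diff_divide_distrib sum_divide_distrib)
  finally have L_eq: "lagrange_coeff \<xi> j i =
    N j / N i - (\<Sum>k\<in>{..<j} - {i}. N k / N i * lagrange_coeff \<xi> j k)" .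
  have "N k / N i * lagrange_coeff \<xi> j k \<in> range to_fract" if k: "k \<in> {..<j} - {i}" for k
  proof (cases "k < i")
    case True
    then show ?thesis by (simp add: N_def poly_newton_poly_eq_0)
  next
    case False
    then have "i < k" "k < j" using k by auto
    then show ?thesis
      using less.hyps newton_quotient_integral[OF i] j unfolding N_def
      by (intro range_to_fract_mult) auto
  qed
  moreover have "N j / N i \<in> range to_fract" unfolding N_def by (rule newton_quotient_integral[OF i j])
  ultimately show ?case unfolding L_eq by (intro range_to_fract_diff range_to_fract_sum) auto
qed

lemma L_mat_integral: "i < m \<Longrightarrow> j < m \<Longrightarrow> L_mat m \<xi> $$ (i, j) \<in> range to_fract"
  by (simp add: index_L_mat lagrange_coeff_integral)

end

theorem lemma1p12:
  fixes t :: "'a::idom" and v :: "'a \<Rightarrow> nat" and m :: nat and \<xi> :: "nat \<Rightarrow> 'a"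
  assumes "dvr_uniformizer_valuation t v"
    and "m \<ge> 1"
    and "minimally_ordered v m \<xi>"
  shows "(\<forall>i<m. \<forall>j<m. L_mat m \<xi> $$ (i, j) \<in> range to_fract)
    \<and> elementary_divisor_exponents t m (vandermonde m \<xi>) (\<lambda>i. \<Sum>j<i. v (\<xi> i - \<xi> j))
    \<and> (\<forall>e. elementary_divisor_exponents t m (vandermonde m \<xi>) e \<longrightarrow>
           (\<forall>i<m. e i = (\<Sum>j<i. v (\<xi> i - \<xi> j))))"
proof (intro conjI allI impI)
  fix i j assume "i < m" "j < m"
  then show "L_mat m \<xi> $$ (i, j) \<in> range to_fract" by (rule L_mat_integral[OF assms(1,3)])
next
  show "elementary_divisor_exponents t m (vandermonde m \<xi>) (\<lambda>i. \<Sum>j<i. v (\<xi> i - \<xi> j))"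
    by (rule elementary_divisor_exponents_vandermonde[OF assms(1,3)])
next
  fix e i assume "elementary_divisor_exponents t m (vandermonde m \<xi>) e" "i < m"
  then show "e i = (\<Sum>j<i. v (\<xi> i - \<xi> j))"
    using elementary_divisor_exponents_unique[OF dvr_uniformizer_valuationD(1,2)[OF assms(1)]]
      elementary_divisor_exponents_vandermonde[OF assms(1,3)]
    by blast
qed

end
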